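(* Let $T\ge1$, $n\ge2$, $d\ge1$, $\tau\in\{1,\dots,T\}$, $\boldsymbol\mu\in\mathbb{R}^d$, $\boldsymbol\Sigma=\mathrm{diag}(\sigma_1^2,\dots,\sigma_d^2)$ with all $\sigma_j>0$, and $\mathbf{z}^*\in\mathbb{R}^d$. Under $\mathbf{H_0}$ the points $\mathbf{X}_{t,k}\in\mathbb{R}^d$ ($t\le T$, $k\le n$) are i.i.d. $\mathcal{N}(\boldsymbol\mu,\boldsymbol\Sigma)$. Let $\mathbf{N_\tau}=\frac1n\sum_{k=1}^n\mathbf{X}_{\tau,k}-\boldsymbol\mu$, $m^*=(\mathbf{z}^*-\boldsymbol\mu)^\top\boldsymbol\Sigma^{-1}(\mathbf{z}^*-\boldsymbol\mu)$ and \[ \log\mathrm{LR}_\tau=-\frac d2\log\Big(\frac{n-1}{n}\Big)-\frac{n}{2(n-1)}\mathbf{N_\tau}^\top\boldsymbol\Sigma^{-1}\mathbf{N_\tau}+\frac{n}{n-1}\mathbf{N_\tau}^\top\boldsymbol\Sigma^{-1}(\mathbf{z}^*-\boldsymbol\mu)-\frac{m^*}{2(n-1)}. \] Let $\alpha(\gamma)=\mathbb{P}_{\mathbf{H_0}}(\log\mathrm{LR}_\tau\ge\gamma)$, $\gamma_{\max}=\frac12\big[m^*-d\log\big(\frac{n-1}{n}\big)\big]$ and $R^2(\gamma)=\frac{2(n-1)}{n}\big[\frac{m^*}{2}-\gamma-\frac d2\log\big(\frac{n-1}{n}\big)\big]$. Then for every $\gamma\le\gamma_{\max}$, \[ \alpha(\gamma)=F_{\chi^2_d(nm^*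 )}\big(n\,R^2(\gamma)\big), \] where $F_{\chi^2_d(\lambda)}$ is the cumulative distribution function of the non-central chi-squared distribution with $d$ degrees of freedom and non-centrality parameter $\lambda$.
   Context: $\log\mathrm{LR}_\tau$ is the log likelihood ratio for testing whether the target $\mathbf{z}^*$ was inserted in batch $\tau$; $\alpha(\gamma)$ is the Type I error of the test rejecting when $\log\mathrm{LR}_\tau\ge\gamma$. *)

theory Defs
  imports "HOL-Probability.Probability"
begin

definition chi2_density :: "nat \<Rightarrow> real \<Rightarrow> real" where
  "chi2_density k x =
     (if x > 0 then x powr (real k / 2 - 1) * exp (- x / 2) / (2 powr (real k / 2) * Gamma (real k / 2))
      else 0)"

definition nc_chi2_density :: "nat \<Rightarrow> real \<Rightarrow> real \<Rightarrow> real" where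
  "nc_chi2_density k lam x =
     (\<Sum>i. exp (- lam / 2) * (lam / 2) ^ i / fact i * chi2_density (k + 2 * i) x)"

definition nc_chi2_cdf :: "nat \<Rightarrow> real \<Rightarrow> real \<Rightarrow> real" where
  "nc_chi2_cdf k lam x = (\<integral>y. indicator {..x} y * nc_chi2_density k lam y \<partial>lborel)"

text \<open>Log likelihood ratio for batch tau. Vectors in R^d are functions on indices 1..d;
  Sigma = diag(sigma_1^2, ..., sigma_d^2).\<close>
definition logLR :: "nat \<Rightarrow> nat \<Rightarrow> (nat \<Rightarrow> real) \<Rightarrow> (nat \<Rightarrow> real) \<Rightarrow> (nat \<Rightarrow> real)
     \<Rightarrow> (nat \<Rightarrow> nat \<Rightarrow> nat \<Rightarrow> real) \<Rightarrow> nat \<Rightarrow> real" where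
  "logLR n d mu sd zs x tau =
     (let N = (\<lambda>j. (\<Sum>k=1..n. x tau k j) / real n - mu j);
          m = (\<Sum>j=1..d. (zs j - mu j)^2 / (sd j)^2)
      in - real d / 2 * ln ((real n - 1) / real n)
         - real n / (2 * (real n - 1)) * (\<Sum>j=1..d. (N j)^2 / (sd j)^2)
         + real n / (real n - 1) * (\<Sum>j=1..d. N j * (zs j - mu j) / (sd j)^2)
         - m / (2 * (real n - 1)))"

definition mstar :: "nat \<Rightarrow> (nat \<Rightarrow> real) \<Rightarrow> (nat \<Rightarrow> real) \<Rightarrow> (nat \<Rightarrow> real) \<Rightarrow> real" where
  "mstar d mu sd zs = (\<Sum>j=1..d. (zs j - mu j)^2 / (sd j)^2)"

definition gamma_max :: "nat \<Rightarrow> nat \<Rightarrow> real \<Rightarrow> real" where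
  "gamma_max n d m = (m - real d * ln ((real n - 1) / real n)) / 2"

definition Rsq :: "nat \<Rightarrow> nat \<Rightarrow> real \<Rightarrow> real \<Rightarrow> real" where
  "Rsq n d m \<gamma> = 2 * (real n - 1) / real n * (m / 2 - \<gamma> - real d / 2 * ln ((real n - 1) / real n))"

end

theory Submission
  imports Defs
begin

text \<open>Let S_j be the j-th coordinate sum of batch tau. Completing the square shows that
  log LR >= gamma iff sum_j Y_j^2 <= n R^2(gamma), where the Y_j = (S_j - n z*_j) / (sqrt n sigma_j)
  are independent N(c_j, 1) variables with sum_j c_j^2 = n m*. A sum of squares of independent
  unit-variance normals is non-central chi-squared: for a single square this is the substitution
  x = y^2, since the Poisson mixture defining the density resums to a cosh; the general case
  follows by induction, because Gamma(a, 2) densities convolve by the Beta integral and the Poisson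
  weights convolve by the binomial theorem.\<close>

section \<open>Gamma densities with scale 2\<close>

definition gamma2_density :: "real \<Rightarrow> real \<Rightarrow> real" where
  "gamma2_density a x =
     (if x > 0 then x powr (a - 1) * exp (- x / 2) / (2 powr a * Gamma a) else 0)"

lemma chi2_density_eq_gamma2_density: "chi2_density k = gamma2_density (real k / 2)"
  by (simp add: fun_eq_iff chi2_density_def gamma2_density_def)

lemma gamma2_density_nonneg: "0 < a \<Longrightarrow> 0 \<le> gamma2_density a x"
  by (auto simp: gamma2_density_def intro!: divide_nonneg_pos mult_pos_pos)

lemma borel_measurable_gamma2_density[measurable]: "gamma2_density a \<in> borel_measurable borel"
  unfolding gamma2_density_def by measurable

lemma gamma2_density_plus1:
  assumes "0 < a" "0 < x"
  shows "gamma2_density (a + 1) x = gamma2_density a x * (x / (2 * a))"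
proof -
  have "Gamma (a + 1) = a * Gamma a"
    using assms(1) by (intro Gamma_plus1) (auto elim!: nonpos_Ints_cases)
  moreover have "x powr (a + 1 - 1) = x powr (a - 1) * x"
    using powr_add[of x "a - 1" 1] assms(2) by simp
  ultimately show ?thesis
    using assms Gamma_real_pos[of a] by (simp add: gamma2_density_def powr_add field_simps)
qed

lemma nn_integral_Beta:
  assumes "0 < a" "0 < b"
  shows "(\<integral>\<^sup>+t. ennreal (indicator {0<..<1} t * (t powr (a - 1) * (1 - t) powr (b - 1))) \<partial>lborel)
       = ennreal (Beta a b)"
proof -
  have "((\<lambda>t. t powr (a - 1) * (1 - t) powr (b - 1)) has_integral Beta a b) {0<..<1}"
    using has_integral_Beta_real[of a b] assms by (simp add: has_integral_Icc_iff_Ioo)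
  from nn_integral_has_integral_lebesgue[OF _ this] show ?thesis
    by simp
qed

text \<open>Substituting y = z t turns the convolution integral into a Beta integral.\<close>
lemma convolution_gamma2_density:
  assumes a: "0 < a" and b: "0 < b"
  shows "(\<integral>\<^sup>+y. ennreal (gamma2_density a (z - y)) * ennreal (gamma2_density b y) \<partial>lborel)
       = ennreal (gamma2_density (a + b) z)"
proof (cases "0 < z")
  case False
  then have "(\<lambda>y. ennreal (gamma2_density a (z - y)) * ennreal (gamma2_density b y)) = (\<lambda>_. 0)"
    by (auto simp: gamma2_density_def)
  then show ?thesis
    using False by (simp add: gamma2_density_def[of "a + b"])
next
  case True
  define C where "C = z powr (a - 1) * z powr (b - 1) * exp (- z / 2)
                        / (2 powr a * 2 powr b * Gamma a * Gamma b)"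
  have C_nonneg: "0 \<le> C"
    unfolding C_def using a b by (auto intro!: divide_nonneg_pos mult_pos_pos Gamma_real_pos)
  have integrand: "ennreal (gamma2_density a (z - z * t)) * ennreal (gamma2_density b (z * t))
      = ennreal C * ennreal (indicator {0<..<1} t * (t powr (b - 1) * (1 - t) powr (a - 1)))" for t
  proof (cases "0 < t \<and> t < 1")
    case t: True
    have "exp (- z / 2) = exp (- (z * (1 - t)) / 2) * exp (- (z * t) / 2)"
      by (simp add: exp_add[symmetric] algebra_simps)
    moreover have "z - z * t = z * (1 - t)"
      by (simp add: algebra_simps)
    ultimately have "gamma2_density a (z - z * t) * gamma2_density b (z * t)
        = C * (t powr (b - 1) * (1 - t) powr (a - 1))"
      using t True by (simp add: gamma2_density_def C_def powr_mult mult_ac)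
    then show ?thesis
      using t C_nonneg gamma2_density_nonneg[OF a] gamma2_density_nonneg[OF b]
      by (simp add: ennreal_mult[symmetric])
  next
    case False
    then have "gamma2_density a (z - z * t) = 0 \<or> gamma2_density b (z * t) = 0"
      using True by (auto simp: gamma2_density_def not_less zero_less_mult_iff)
    then show ?thesis
      using False by auto
  qed
  have "0 \<le> Beta b a"
    using a b by (simp add: Beta_def Gamma_real_pos less_imp_le)
  have "(\<integral>\<^sup>+y. ennreal (gamma2_density a (z - y)) * ennreal (gamma2_density b y) \<partial>lborel)
      = ennreal z * (\<integral>\<^sup>+t. ennreal (gamma2_density a (z - z * t)) * ennreal (gamma2_density b (z * t)) \<partial>lborel)"
    using True by (subst nn_integral_real_affine[where c=z and t=0]) auto
  also have "\<dots> = ennreal z * (ennreal C * ennreal (Beta b a))"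
    unfolding integrand by (subst nn_integral_cmult) (auto simp: nn_integral_Beta[OF b a])
  also have "\<dots> = ennreal (z * C * Beta b a)"
    using True C_nonneg \<open>0 \<le> Beta b a\<close> by (simp add: ennreal_mult mult.assoc)
  also have "z * C * Beta b a = gamma2_density (a + b) z"
  proof -
    have "z * C * Beta b a
        = (z * (z powr (a - 1) * z powr (b - 1))) * exp (- z / 2) / (2 powr a * 2 powr b * Gamma (a + b))"
      using Gamma_real_pos[OF a] Gamma_real_pos[OF b]
      by (simp add: C_def Beta_def add.commute[of b a])
    also have "z * (z powr (a - 1) * z powr (b - 1)) = z powr (a + b - 1)"
    proof -
      have "a + b - 1 = 1 + (a - 1) + (b - 1)"
        by simp
      then show ?thesis
        using True by (simp only: powr_add) (simp add: mult.assoc)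
    qed
    also have "2 powr a * 2 powr b = (2::real) powr (a + b)"
      by (simp add: powr_add)
    finally show ?thesis
      using True by (simp add: gamma2_density_def)
  qed
  finally show ?thesis .
qed

lemma convolution_chi2_density:
  assumes "1 \<le> k1" "1 \<le> k2"
  shows "(\<integral>\<^sup>+y. ennreal (chi2_density k1 (z - y)) * ennreal (chi2_density k2 y) \<partial>lborel)
       = ennreal (chi2_density (k1 + k2) z)"
  using convolution_gamma2_density[of "real k1 / 2" "real k2 / 2" z] assms
  by (simp add: chi2_density_eq_gamma2_density add_divide_distrib)

lemma chi2_density_nonneg: "1 \<le> k \<Longrightarrow> 0 \<le> chi2_density k x"
  by (simp add: chi2_density_eq_gamma2_density gamma2_density_nonneg)

lemma borel_measurable_chi2_density[measurable]: "chi2_density k \<in> borel_measurable borel"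
  by (simp add: chi2_density_eq_gamma2_density)

lemma chi2_density_add2:
  assumes "1 \<le> k" "0 < x"
  shows "chi2_density (k + 2) x = chi2_density k x * (x / real k)"
  using gamma2_density_plus1[of "real k / 2" x] assms
  by (simp add: chi2_density_eq_gamma2_density add_divide_distrib add.commute)

section \<open>The non-central chi-squared density\<close>

text \<open>The mixing weights of nc_chi2_density: the Poisson(l/2) probabilities, written out
  because poisson_pmf needs a positive rate and l = 0 must be allowed.\<close>
definition poisson_weight :: "real \<Rightarrow> nat \<Rightarrow> real" where
  "poisson_weight l i = exp (- l / 2) * (l / 2) ^ i / fact i"

lemma nc_chi2_density_eq_suminf:
  "nc_chi2_density k l x = (\<Sum>i. poisson_weight l i * chi2_density (k + 2 * i) x)"
  by (simp add: nc_chi2_density_def poisson_weight_def)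

lemma poisson_weight_nonneg: "0 \<le> l \<Longrightarrow> 0 \<le> poisson_weight l i"
  by (simp add: poisson_weight_def)

lemma poisson_weight_Suc: "poisson_weight l (Suc i) = poisson_weight l i * (l / (2 * (real i + 1)))"
  by (simp add: poisson_weight_def field_simps)

lemma poisson_weight_convolution:
  "(\<Sum>i\<le>s. poisson_weight l1 i * poisson_weight l2 (s - i)) = poisson_weight (l1 + l2) s"
proof -
  have "poisson_weight l1 i * poisson_weight l2 (s - i)
      = exp (- (l1 + l2) / 2) / fact s * (of_nat (s choose i) * (l1 / 2) ^ i * (l2 / 2) ^ (s - i))"
    if "i \<le> s" for i
  proof -
    have "exp (- (l1 + l2) / 2) = exp (- l1 / 2) * exp (- l2 / 2)"
      by (simp add: exp_add[symmetric] add_divide_distrib)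
    then show ?thesis
      using that by (simp add: poisson_weight_def binomial_fact field_simps)
  qed
  then have "(\<Sum>i\<le>s. poisson_weight l1 i * poisson_weight l2 (s - i))
      = exp (- (l1 + l2) / 2) / fact s * (l1 / 2 + l2 / 2) ^ s"
    by (simp add: binomial_ring sum_distrib_left)
  then show ?thesis
    by (simp add: poisson_weight_def add_divide_distrib)
qed

lemma summable_nc_chi2_terms:
  assumes k: "1 \<le> k" and l: "0 \<le> l"
  shows "summable (\<lambda>i. poisson_weight l i * chi2_density (k + 2 * i) x)"
proof (cases "0 < x")
  case False
  then show ?thesis
    by (simp add: chi2_density_def)
next
  case x: True
  define f where "f i = poisson_weight l i * chi2_density (k + 2 * i) x" for i
  have f_nonneg: "0 \<le> f i" for i
    unfolding f_def using k l by (simp add: poisson_weight_nonneg chi2_density_nonneg)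
  define r where "r i = l * x / (2 * (real i + 1) * real (k + 2 * i))" for i
  have f_Suc: "f (Suc i) = f i * r i" for i
    using chi2_density_add2[of "k + 2 * i" x] k x
    by (simp add: f_def r_def poisson_weight_Suc algebra_simps)
  have "norm (f (Suc i)) \<le> 1 / 2 * norm (f i)" if "nat \<lceil>l * x\<rceil> \<le> i" for i
  proof -
    have pos: "0 < 2 * (real i + 1) * real (k + 2 * i)"
      using k by simp
    have "l * x \<le> real i"
      using that by linarith
    also have "\<dots> \<le> (real i + 1) * real (k + 2 * i)"
      using k by (simp add: algebra_simps)
    finally have "r i \<le> 1 / 2"
      unfolding r_def pos_divide_le_eq[OF pos] by (simp add: algebra_simps)
    then have "f i * r i \<le> f i * (1 / 2)"
      using f_nonneg[of i] by (rule mult_left_mono)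
    moreover have "0 \<le> r i"
      unfolding r_def using l x by simp
    ultimately show ?thesis
      using f_nonneg[of i] by (simp add: f_Suc)
  qed
  then show ?thesis
    unfolding f_def[symmetric] by (intro summable_ratio_test[where c="1/2" and N="nat \<lceil>l * x\<rceil>"]) auto
qed

lemma nc_chi2_density_nonneg: "1 \<le> k \<Longrightarrow> 0 \<le> l \<Longrightarrow> 0 \<le> nc_chi2_density k l x"
  unfolding nc_chi2_density_eq_suminf
  by (intro suminf_nonneg summable_nc_chi2_terms mult_nonneg_nonneg poisson_weight_nonneg
      chi2_density_nonneg) auto

lemma nc_chi2_density_nonpos: "x \<le> 0 \<Longrightarrow> nc_chi2_density k l x = 0"
  by (simp add: nc_chi2_density_def chi2_density_def)

lemma borel_measurable_nc_chi2_density[measurable]: "nc_chi2_density k l \<in> borel_measurable borel"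
  unfolding nc_chi2_density_eq_suminf by measurable

lemma ennreal_nc_chi2_density:
  assumes "1 \<le> k" "0 \<le> l"
  shows "ennreal (nc_chi2_density k l x)
       = (\<Sum>i. ennreal (poisson_weight l i * chi2_density (k + 2 * i) x))"
  unfolding nc_chi2_density_eq_suminf using assms
  by (intro suminf_ennreal2[symmetric] summable_nc_chi2_terms mult_nonneg_nonneg
      poisson_weight_nonneg chi2_density_nonneg) auto

text \<open>Expand both mixtures as a Cauchy product: the chi-squared densities convolve term by term,
  and the Poisson weights convolve to Poisson weights.\<close>
lemma convolution_nc_chi2_density:
  assumes k1: "1 \<le> k1" and k2: "1 \<le> k2" and l1: "0 \<le> l1" and l2: "0 \<le> l2"
  shows "(\<integral>\<^sup>+y. ennreal (nc_chi2_density k1 l1 (z - y)) * ennreal (nc_chi2_density k2 l2 y) \<partial>lborel)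
       = ennreal (nc_chi2_density (k1 + k2) (l1 + l2) z)"
proof -
  define u where "u y i = poisson_weight l1 i * chi2_density (k1 + 2 * i) (z - y)" for y i
  define v where "v y j = poisson_weight l2 j * chi2_density (k2 + 2 * j) y" for y j
  define c where "c s = chi2_density (k1 + k2 + 2 * s) z" for s
  have u_nonneg: "0 \<le> u y i" and v_nonneg: "0 \<le> v y j" for y i j
    unfolding u_def v_def using k1 k2 l1 l2
    by (simp_all add: poisson_weight_nonneg chi2_density_nonneg)
  have summable_u: "summable (\<lambda>i. norm (u y i))" and summable_v: "summable (\<lambda>j. norm (v y j))" for y
    using summable_nc_chi2_terms[OF k1 l1] summable_nc_chi2_terms[OF k2 l2] u_nonneg v_nonneg
    by (simp_all add: u_def v_def)
  have [measurable]: "(\<lambda>y. u y i) \<in> borel_measurable borel" "(\<lambda>y. v y j) \<in> borel_measurable borel" for i j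
    unfolding u_def v_def by measurable
  have product: "ennreal (nc_chi2_density k1 l1 (z - y)) * ennreal (nc_chi2_density k2 l2 y)
      = (\<Sum>s. \<Sum>i\<le>s. ennreal (u y i * v y (s - i)))" for y
  proof -
    have "nc_chi2_density k1 l1 (z - y) * nc_chi2_density k2 l2 y = (\<Sum>s. \<Sum>i\<le>s. u y i * v y (s - i))"
      unfolding nc_chi2_density_eq_suminf u_def[symmetric] v_def[symmetric]
      by (rule Cauchy_product[OF summable_u summable_v])
    moreover have "summable (\<lambda>s. \<Sum>i\<le>s. u y i * v y (s - i))"
      using summable_Cauchy_product[OF summable_u summable_v] .
    ultimately show ?thesis
      using u_nonneg v_nonneg k1 k2 l1 l2
      by (simp add: ennreal_mult[symmetric] nc_chi2_density_nonneg suminf_ennreal2 sum_nonneg sum_ennreal)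
  qed
  have summand_integral: "(\<integral>\<^sup>+y. ennreal (u y i * v y j) \<partial>lborel)
      = ennreal (poisson_weight l1 i * poisson_weight l2 j * c (i + j))" for i j
  proof -
    have "(\<integral>\<^sup>+y. ennreal (u y i * v y j) \<partial>lborel)
        = ennreal (poisson_weight l1 i * poisson_weight l2 j)
          * (\<integral>\<^sup>+y. ennreal (chi2_density (k1 + 2 * i) (z - y)) * ennreal (chi2_density (k2 + 2 * j) y) \<partial>lborel)"
      using k1 k2 l1 l2
      by (subst nn_integral_cmult[symmetric])
        (auto simp: u_def v_def ennreal_mult[symmetric] poisson_weight_nonneg chi2_density_nonneg mult_ac
          intro!: nn_integral_cong)
    also have "\<dots> = ennreal (poisson_weight l1 i * poisson_weight l2 j)
        * ennreal (chi2_density (k1 + 2 * i + (k2 + 2 * j)) z)"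
      using k1 k2 by (subst convolution_chi2_density) auto
    also have "\<dots> = ennreal (poisson_weight l1 i * poisson_weight l2 j * c (i + j))"
      using k1 l1 l2
      by (simp add: c_def ennreal_mult poisson_weight_nonneg chi2_density_nonneg algebra_simps)
    finally show ?thesis .
  qed
  have "(\<integral>\<^sup>+y. ennreal (nc_chi2_density k1 l1 (z - y)) * ennreal (nc_chi2_density k2 l2 y) \<partial>lborel)
      = (\<Sum>s. \<Sum>i\<le>s. \<integral>\<^sup>+y. ennreal (u y i * v y (s - i)) \<partial>lborel)"
    by (simp add: product nn_integral_suminf nn_integral_sum)
  also have "\<dots> = (\<Sum>s. ennreal (\<Sum>i\<le>s. poisson_weight l1 i * poisson_weight l2 (s - i) * c s))"
    using l1 l2 k1 by (simp add: summand_integral sum_ennreal poisson_weight_nonneg c_def chi2_density_nonneg)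
  also have "\<dots> = (\<Sum>s. ennreal (poisson_weight (l1 + l2) s * c s))"
    by (simp add: sum_distrib_right[symmetric] poisson_weight_convolution)
  also have "\<dots> = ennreal (nc_chi2_density (k1 + k2) (l1 + l2) z)"
    using ennreal_nc_chi2_density[of "k1 + k2" "l1 + l2" z] k1 l1 l2 by (simp add: c_def)
  finally show ?thesis .
qed

section \<open>The square of a unit-variance normal variable\<close>

lemma Gamma_of_nat_plus_half: "4 ^ i * fact i * Gamma (real i + 1 / 2) = fact (2 * i) * sqrt pi"
proof (induction i)
  case 0
  then show ?case
    by (simp add: Gamma_one_half_real)
next
  case (Suc i)
  have "real i + 1 / 2 \<notin> \<int>\<^sub>\<le>\<^sub>0"
    by (auto elim!: nonpos_Ints_cases)
  then have "Gamma (real (Suc i) + 1 / 2) = (real i + 1 / 2) * Gamma (real i + 1 / 2)"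
    using Gamma_plus1[of "real i + 1 / 2"] by (simp add: add_ac)
  have fact_2Suc: "fact (2 * Suc i) = (2 * real i + 2) * (2 * real i + 1) * fact (2 * i)"
  proof -
    have "2 * Suc i = Suc (Suc (2 * i))"
      by simp
    then show ?thesis
      by (simp only: fact_Suc) (simp add: algebra_simps)
  qed
  have "4 ^ Suc i * fact (Suc i) * Gamma (real (Suc i) + 1 / 2)
      = (2 * real i + 2) * (2 * real i + 1) * (4 ^ i * fact i * Gamma (real i + 1 / 2))"
    using \<open>Gamma (real (Suc i) + 1 / 2) = _\<close> by (simp add: algebra_simps)
  also have "\<dots> = fact (2 * Suc i) * sqrt pi"
    unfolding Suc.IH fact_2Suc by (simp only: mult.assoc)
  finally show ?case .
qed

lemma sums_cosh_even: "(\<lambda>i. x ^ (2 * i) / fact (2 * i)) sums cosh (x :: real)"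
proof -
  define f where "f n = (if even n then x ^ n /\<^sub>R fact n else 0)" for n :: nat
  have "f sums cosh x"
    unfolding f_def by (rule cosh_converges)
  moreover have "f n = 0" if "n \<notin> range (\<lambda>i. 2 * i)" for n
    using that by (auto simp: f_def elim!: evenE)
  ultimately have "(\<lambda>i. f (2 * i)) sums cosh x"
    using sums_mono_reindex[of "\<lambda>i. 2 * i" f] by (simp add: strict_mono_def)
  then show ?thesis
    by (simp add: f_def divide_inverse mult.commute)
qed

lemma nc_chi2_density_one_summand:
  assumes x: "0 < x"
  shows "poisson_weight (c\<^sup>2) i * chi2_density (1 + 2 * i) x
       = exp (- (c\<^sup>2 + x) / 2) / (sqrt x * sqrt (2 * pi)) * ((c * sqrt x) ^ (2 * i) / fact (2 * i))"
proof -
  define G where "G = Gamma (real i + 1 / 2)"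
  have G_pos: "0 < G"
    unfolding G_def by (simp add: Gamma_real_pos)
  have half: "real (1 + 2 * i) / 2 = real i + 1 / 2"
    by simp
  have "x powr (real i + 1 / 2 - 1) = x ^ i / sqrt x"
    using x by (simp add: powr_diff powr_realpow powr_half_sqrt)
  moreover have "(2::real) powr (real i + 1 / 2) = 2 ^ i * sqrt 2"
    by (simp add: powr_add powr_realpow powr_half_sqrt)
  ultimately have chi2_eq: "chi2_density (1 + 2 * i) x = x ^ i * exp (- x / 2) / (sqrt x * 2 ^ i * sqrt 2 * G)"
    using x unfolding chi2_density_def half G_def by simp
  have weight_eq: "poisson_weight (c\<^sup>2) i = exp (- c\<^sup>2 / 2) * (c\<^sup>2) ^ i / (2 ^ i * fact i)"
    by (simp add: poisson_weight_def power_divide)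
  have four_eq: "(4::real) ^ i = 2 ^ i * 2 ^ i"
    by (simp add: power_mult_distrib[symmetric])
  have "poisson_weight (c\<^sup>2) i * chi2_density (1 + 2 * i) x
      = exp (- c\<^sup>2 / 2) * exp (- x / 2) * ((c\<^sup>2) ^ i * x ^ i) / (sqrt x * sqrt 2 * (4 ^ i * fact i * G))"
    unfolding chi2_eq weight_eq four_eq using x G_pos by (simp add: field_simps)
  also have "\<dots> = exp (- c\<^sup>2 / 2) * exp (- x / 2) * ((c\<^sup>2) ^ i * x ^ i) / (sqrt x * sqrt 2 * (fact (2 * i) * sqrt pi))"
    by (simp only: G_def Gamma_of_nat_plus_half)
  also have "\<dots> = exp (- (c\<^sup>2 + x) / 2) / (sqrt x * sqrt (2 * pi)) * ((c * sqrt x) ^ (2 * i) / fact (2 * i))"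
  proof -
    have "exp (- (c\<^sup>2 + x) / 2) = exp (- c\<^sup>2 / 2) * exp (- x / 2)"
      by (simp add: exp_add[symmetric] add_divide_distrib)
    moreover have "(c * sqrt x) ^ (2 * i) = (c\<^sup>2) ^ i * x ^ i"
      using x by (simp add: power_mult power_mult_distrib)
    ultimately show ?thesis
      using x by (simp add: real_sqrt_mult field_simps)
  qed
  finally show ?thesis .
qed

text \<open>With one degree of freedom the Poisson mixture resums to cosh (c sqrt x).\<close>
lemma nc_chi2_density_one:
  assumes x: "0 < x"
  shows "nc_chi2_density 1 (c\<^sup>2) x
       = (normal_density c 1 (sqrt x) + normal_density c 1 (- sqrt x)) / (2 * sqrt x)"
proof -
  define K where "K = exp (- (c\<^sup>2 + x) / 2) / (sqrt x * sqrt (2 * pi))"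
  have "(\<lambda>i. poisson_weight (c\<^sup>2) i * chi2_density (1 + 2 * i) x) sums (K * cosh (c * sqrt x))"
    unfolding nc_chi2_density_one_summand[OF x] K_def[symmetric] by (intro sums_mult sums_cosh_even)
  then have "nc_chi2_density 1 (c\<^sup>2) x = K * cosh (c * sqrt x)"
    by (simp add: nc_chi2_density_eq_suminf sums_iff)
  moreover have "exp (- (sqrt x - c)\<^sup>2 / 2) = exp (- (c\<^sup>2 + x) / 2) * exp (c * sqrt x)"
    "exp (- (- sqrt x - c)\<^sup>2 / 2) = exp (- (c\<^sup>2 + x) / 2) * exp (- (c * sqrt x))"
    using x by (simp_all add: exp_add[symmetric] power2_diff power2_sum field_simps)
  ultimately show ?thesis
    using x by (simp add: normal_density_def K_def cosh_def field_simps)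
qed

lemma nn_integral_atLeast_SUP:
  fixes f :: "real \<Rightarrow> real" and r :: "nat \<Rightarrow> real"
  assumes [measurable]: "f \<in> borel_measurable borel"
    and "incseq r" and "\<And>x. \<exists>m. x \<le> r m"
  shows "(\<integral>\<^sup>+x. ennreal (f x * indicator {a..} x) \<partial>lborel)
       = (SUP m. \<integral>\<^sup>+x. ennreal (f x * indicator {a..r m} x) \<partial>lborel)"
proof -
  have density: "(\<integral>\<^sup>+x. ennreal (f x * indicator S x) \<partial>lborel) = emeasure (density lborel f) S"
    if "S \<in> sets borel" for S
    using that by (subst emeasure_density) (auto intro!: nn_integral_cong split: split_indicator)
  have "{a..} = (\<Union>m. {a..r m})"
    using assms(3) by (auto intro: order_trans)
  moreover have "incseq (\<lambda>m. {a..r m})"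
    using assms(2) by (auto simp: incseq_def intro: order_trans)
  ultimately have "emeasure (density lborel f) {a..} = (SUP m. emeasure (density lborel f) {a..r m})"
    using SUP_emeasure_incseq[of "\<lambda>m. {a..r m}" "density lborel f"] by (simp add: image_subset_iff)
  then show ?thesis
    by (simp add: density)
qed

lemma nn_integral_substitution_square:
  fixes F :: "real \<Rightarrow> real"
  assumes [measurable]: "F \<in> borel_measurable borel"
  shows "(\<integral>\<^sup>+x. ennreal (F x * indicator {0..} x) \<partial>lborel)
       = (\<integral>\<^sup>+y. ennreal (F (y\<^sup>2) * (2 * y) * indicator {0..} y) \<partial>lborel)"
proof -
  have "(\<integral>\<^sup>+x. ennreal (F x * indicator {0..(real m)\<^sup>2} x) \<partial>lborel)
      = (\<integral>\<^sup>+y. ennreal (F (y\<^sup>2) * (2 * y) * indicator {0..real m} y) \<partial>lborel)" for m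
  proof -
    have "(\<integral>\<^sup>+x. ennreal (F x * indicator {0\<^sup>2..(real m)\<^sup>2} x) \<partial>lborel)
        = (\<integral>\<^sup>+y. ennreal (F (y\<^sup>2) * (2 * y) * indicator {0..real m} y) \<partial>lborel)"
      by (rule nn_integral_substitution[where g="\<lambda>y. y\<^sup>2"])
        (auto simp: set_borel_measurable_def intro!: derivative_eq_intros continuous_intros)
    then show ?thesis
      by simp
  qed
  moreover have "\<exists>m. x \<le> (real m)\<^sup>2" for x
  proof -
    obtain m where "x \<le> real m"
      using real_arch_simple by blast
    then show ?thesis
      by (intro exI[of _ m]) (cases m; auto simp: power2_eq_square intro: order_trans)
  qed
  moreover have "incseq (\<lambda>m. (real m)\<^sup>2)"
    by (auto simp: incseq_def intro: power_mono)
  ultimately show ?thesis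
    using nn_integral_atLeast_SUP[of F "\<lambda>m. (real m)\<^sup>2" 0]
      nn_integral_atLeast_SUP[of "\<lambda>y. F (y\<^sup>2) * (2 * y)" real 0]
    by (simp add: real_arch_simple mono_def incseq_def mult.assoc)
qed

lemma nn_integral_lborel_symmetrize:
  fixes g :: "real \<Rightarrow> ennreal"
  assumes [measurable]: "g \<in> borel_measurable borel"
  shows "(\<integral>\<^sup>+y. g y \<partial>lborel) = (\<integral>\<^sup>+y. (g y + g (- y)) * indicator {0<..} y \<partial>lborel)"
proof -
  have "(\<integral>\<^sup>+y. g (- y) * indicator {0<..} y \<partial>lborel) = (\<integral>\<^sup>+y. g y * indicator {..<0} y \<partial>lborel)"
    using nn_integral_real_affine[of "\<lambda>y. g y * indicator {..<0} y" "- 1" 0]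
    by (simp add: indicator_def)
  then have "(\<integral>\<^sup>+y. (g y + g (- y)) * indicator {0<..} y \<partial>lborel)
      = (\<integral>\<^sup>+y. g y * indicator {0<..} y \<partial>lborel) + (\<integral>\<^sup>+y. g y * indicator {..<0} y \<partial>lborel)"
    by (simp add: distrib_right nn_integral_add)
  also have "\<dots> = (\<integral>\<^sup>+y. g y * indicator {0<..} y + g y * indicator {..<0} y \<partial>lborel)"
    by (simp add: nn_integral_add)
  also have "\<dots> = (\<integral>\<^sup>+y. g y \<partial>lborel)"
    using AE_lborel_singleton[of 0] by (intro nn_integral_cong_AE) (auto simp: indicator_def)
  finally show ?thesis ..
qed

lemma nn_integral_normal_density_square:
  assumes [measurable]: "A \<in> sets borel"
  shows "(\<integral>\<^sup>+y. ennreal (normal_density c 1 y) * indicator A (y\<^sup>2) \<partial>lborel)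
       = (\<integral>\<^sup>+x. ennreal (nc_chi2_density 1 (c\<^sup>2) x) * indicator A x \<partial>lborel)"
proof -
  let ?f = "nc_chi2_density 1 (c\<^sup>2)" and ?\<phi> = "normal_density c 1"
  have f_nonneg: "0 \<le> ?f x" for x
    by (simp add: nc_chi2_density_nonneg)
  have folded: "?f (y\<^sup>2) * (2 * y) = ?\<phi> y + ?\<phi> (- y)" if "0 < y" for y
    using nc_chi2_density_one[of "y\<^sup>2" c] that by simp
  have pointwise: "ennreal (?f (y\<^sup>2) * indicator A (y\<^sup>2) * (2 * y) * indicator {0..} y)
      = (ennreal (?\<phi> y) * indicator A (y\<^sup>2) + ennreal (?\<phi> (- y)) * indicator A ((- y)\<^sup>2))
        * indicator {0<..} y" if "y \<noteq> 0" for y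
  proof (cases "0 < y")
    case True
    then have "?f (y\<^sup>2) * indicator A (y\<^sup>2) * (2 * y) * indicator {0..} y
        = (?\<phi> y + ?\<phi> (- y)) * indicator A (y\<^sup>2)"
      using folded[OF True] by (simp add: ac_simps)
    then show ?thesis
      using True by (cases "y\<^sup>2 \<in> A") (simp_all add: ennreal_plus)
  next
    case False
    with that show ?thesis
      by (simp add: indicator_def)
  qed
  have "(\<integral>\<^sup>+x. ennreal (?f x) * indicator A x \<partial>lborel)
      = (\<integral>\<^sup>+x. ennreal (?f x * indicator A x * indicator {0..} x) \<partial>lborel)"
    by (intro nn_integral_cong) (auto simp: nc_chi2_density_nonpos split: split_indicator)
  also have "\<dots> = (\<integral>\<^sup>+y. ennreal (?f (y\<^sup>2) * indicator A (y\<^sup>2) * (2 * y) * indicator {0..} y) \<partial>lborel)"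
    by (rule nn_integral_substitution_square) measurable
  also have "\<dots> = (\<integral>\<^sup>+y. (ennreal (?\<phi> y) * indicator A (y\<^sup>2) + ennreal (?\<phi> (- y)) * indicator A ((- y)\<^sup>2))
                        * indicator {0<..} y \<partial>lborel)"
    using AE_lborel_singleton[of 0] by (intro nn_integral_cong_AE, eventually_elim) (erule pointwise)
  also have "\<dots> = (\<integral>\<^sup>+y. ennreal (?\<phi> y) * indicator A (y\<^sup>2) \<partial>lborel)"
    by (rule nn_integral_lborel_symmetrize[symmetric]) measurable
  finally show ?thesis ..
qed

lemma (in prob_space) distributed_square_normal:
  assumes Y: "distributed M lborel Y (normal_density c 1)"
  shows "distributed M lborel (\<lambda>\<omega>. (Y \<omega>)\<^sup>2) (\<lambda>x. ennreal (nc_chi2_density 1 (c\<^sup>2) x))"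
proof -
  have [measurable]: "Y \<in> borel_measurable M"
    using distributed_measurable[OF Y] by simp
  have "distr M lborel (\<lambda>\<omega>. (Y \<omega>)\<^sup>2) = density lborel (\<lambda>x. ennreal (nc_chi2_density 1 (c\<^sup>2) x))"
  proof (rule measure_eqI)
    fix A assume "A \<in> sets (distr M lborel (\<lambda>\<omega>. (Y \<omega>)\<^sup>2))"
    then have [measurable]: "A \<in> sets borel"
      by simp
    have "emeasure (distr M lborel (\<lambda>\<omega>. (Y \<omega>)\<^sup>2)) A = emeasure M (Y -` {y. y\<^sup>2 \<in> A} \<inter> space M)"
      by (subst emeasure_distr) (auto intro!: arg_cong2[where f=emeasure])
    also have "\<dots> = (\<integral>\<^sup>+y. ennreal (normal_density c 1 y) * indicator A (y\<^sup>2) \<partial>lborel)"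
      by (subst distributed_emeasure[OF Y]) (auto intro!: nn_integral_cong split: split_indicator)
    also have "\<dots> = emeasure (density lborel (\<lambda>x. ennreal (nc_chi2_density 1 (c\<^sup>2) x))) A"
      by (simp add: nn_integral_normal_density_square emeasure_density)
    finally show "emeasure (distr M lborel (\<lambda>\<omega>. (Y \<omega>)\<^sup>2)) A
        = emeasure (density lborel (\<lambda>x. ennreal (nc_chi2_density 1 (c\<^sup>2) x))) A" .
  qed simp
  then show ?thesis
    unfolding distributed_def by simp
qed

section \<open>Sums of squares and the likelihood-ratio test\<close>

lemma (in prob_space) distributed_sum_squares_normal:
  assumes "finite I" "I \<noteq> {}" "indep_vars (\<lambda>_. borel) Y I"
    and "\<And>j. j \<in> I \<Longrightarrow> distributed M lborel (Y j) (normal_density (c j) 1)"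
  shows "distributed M lborel (\<lambda>\<omega>. \<Sum>j\<in>I. (Y j \<omega>)\<^sup>2)
           (\<lambda>x. ennreal (nc_chi2_density (card I) (\<Sum>j\<in>I. (c j)\<^sup>2) x))"
  using assms
proof (induction I rule: finite_ne_induct)
  case (singleton i)
  then show ?case
    using distributed_square_normal[of "Y i" "c i"] by simp
next
  case (insert i I)
  have "indep_vars (\<lambda>_. borel) (\<lambda>j \<omega>. (Y j \<omega>)\<^sup>2) (insert i I)"
    by (rule indep_vars_compose2[OF insert.prems(1)]) measurable
  from indep_vars_sum[OF insert.hyps(1,3) this]
  have "indep_var borel (\<lambda>\<omega>. (Y i \<omega>)\<^sup>2) borel (\<lambda>\<omega>. \<Sum>j\<in>I. (Y j \<omega>)\<^sup>2)"
    by simp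
  moreover have "distributed M lborel (\<lambda>\<omega>. (Y i \<omega>)\<^sup>2) (\<lambda>x. ennreal (nc_chi2_density 1 ((c i)\<^sup>2) x))"
    using insert.prems by (intro distributed_square_normal) auto
  moreover have "distributed M lborel (\<lambda>\<omega>. \<Sum>j\<in>I. (Y j \<omega>)\<^sup>2)
      (\<lambda>x. ennreal (nc_chi2_density (card I) (\<Sum>j\<in>I. (c j)\<^sup>2) x))"
    using insert.prems by (intro insert.IH) (auto intro: indep_vars_subset)
  ultimately have "distributed M lborel (\<lambda>\<omega>. (Y i \<omega>)\<^sup>2 + (\<Sum>j\<in>I. (Y j \<omega>)\<^sup>2))
      (\<lambda>z. \<integral>\<^sup>+y. ennreal (nc_chi2_density 1 ((c i)\<^sup>2) (z - y))
                  * ennreal (nc_chi2_density (card I) (\<Sum>j\<in>I. (c j)\<^sup>2) y) \<partial>lborel)"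
    by (rule distributed_convolution)
  moreover have "1 \<le> card I"
    using insert.hyps(1,2) by (simp add: Suc_le_eq card_gt_0_iff)
  ultimately show ?case
    using insert.hyps by (simp add: convolution_nc_chi2_density sum_nonneg)
qed

lemma (in prob_space) indep_vars_block_sums:
  fixes X :: "'i \<Rightarrow> 'a \<Rightarrow> real"
  assumes "indep_vars (\<lambda>_. borel) X I" "disjoint_family_on K J" "\<And>j. j \<in> J \<Longrightarrow> K j \<subseteq> I"
  shows "indep_vars (\<lambda>_. borel) (\<lambda>j \<omega>. \<Sum>i\<in>K j. X i \<omega>) J"
proof -
  have "indep_vars (\<lambda>_. borel) (\<lambda>j \<omega>. (\<lambda>g. \<Sum>i\<in>K j. g i) (restrict (\<lambda>i. X i \<omega>) (K j))) J"
    using indep_vars_restrict[OF assms(1) assms(3,2)] by (rule indep_vars_compose2) measurable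
  then show ?thesis
    by (rule indep_vars_cong[THEN iffD1, rotated 3]) auto
qed

lemma (in prob_space) normal_distributed_standardize:
  assumes "distributed M lborel X (normal_density \<mu> \<sigma>)" "0 < \<sigma>"
  shows "distributed M lborel (\<lambda>\<omega>. (X \<omega> - z) / \<sigma>) (normal_density ((\<mu> - z) / \<sigma>) 1)"
  using normal_density_affine[OF assms, of "1 / \<sigma>" "- z / \<sigma>"] assms(2)
  by (simp add: diff_divide_distrib)

lemma (in prob_space) prob_le_distributed:
  fixes Z :: "'a \<Rightarrow> real"
  assumes "distributed M lborel Z (\<lambda>x. ennreal (f x))" "\<And>x. 0 \<le> f x"
  shows "measure M {\<omega> \<in> space M. Z \<omega> \<le> t} = (\<integral>y. indicator {..t} y * f y \<partial>lborel)"
proof -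
  have [measurable]: "Z \<in> borel_measurable M"
    using distributed_measurable[OF assms(1)] by simp
  have "(\<integral>y. indicator {..t} y * f y \<partial>lborel) = (\<integral>\<omega>. indicator {..t} (Z \<omega>) \<partial>M)"
    using distributed_integral[OF assms(1), of "indicator {..t}"] assms(2)
    by (simp add: mult.commute)
  also have "\<dots> = (\<integral>\<omega>. indicator {\<omega> \<in> space M. Z \<omega> \<le> t} \<omega> \<partial>M)"
    by (intro Bochner_Integration.integral_cong) (auto split: split_indicator)
  also have "\<dots> = measure M {\<omega> \<in> space M. Z \<omega> \<le> t}"
    by (simp add: Int_absorb2)
  finally show ?thesis ..
qed

lemma square_standardized_sum_eq:
  fixes S :: real
  assumes "0 < n" "\<sigma> \<noteq> 0"
  shows "((S - n * z) / (sqrt n * \<sigma>))\<^sup>2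
       = n * ((S / n - \<mu>)\<^sup>2 / \<sigma>\<^sup>2 + (z - \<mu>)\<^sup>2 / \<sigma>\<^sup>2 - 2 * ((S / n - \<mu>) * (z - \<mu>) / \<sigma>\<^sup>2))"
proof -
  have "S - n * z = n * (S / n - \<mu> - (z - \<mu>))"
    using assms by (simp add: algebra_simps)
  then have "((S - n * z) / (sqrt n * \<sigma>))\<^sup>2 = n * ((S / n - \<mu> - (z - \<mu>))\<^sup>2 / \<sigma>\<^sup>2)"
    using assms by (simp add: power_divide power_mult_distrib) (simp add: field_simps power2_eq_square)
  also have "\<dots> = n * ((S / n - \<mu>)\<^sup>2 / \<sigma>\<^sup>2 + (z - \<mu>)\<^sup>2 / \<sigma>\<^sup>2 - 2 * ((S / n - \<mu>) * (z - \<mu>) / \<sigma>\<^sup>2))"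
    using power2_diff[of "S / n - \<mu>" "z - \<mu>"] by (simp only: diff_divide_distrib add_divide_distrib times_divide_eq_right mult.assoc)
  finally show ?thesis .
qed
lemma logLR_ge_iff:
  fixes x :: "nat \<Rightarrow> nat \<Rightarrow> nat \<Rightarrow> real"
  assumes n: "2 \<le> n" and sd: "\<And>j. j \<in> {1..d} \<Longrightarrow> 0 < sd j"
  shows "\<gamma> \<le> logLR n d mu sd zs x tau \<longleftrightarrow>
    (\<Sum>j=1..d. (((\<Sum>k=1..n. x tau k j) - real n * zs j) / (sqrt (real n) * sd j))\<^sup>2)
      \<le> real n * Rsq n d (mstar d mu sd zs) \<gamma>"
proof -
  define N where "N j = (\<Sum>k=1..n. x tau k j) / real n - mu j" for j
  define A where "A = (\<Sum>j=1..d. (N j)\<^sup>2 / (sd j)\<^sup>2)"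
  define B where "B = (\<Sum>j=1..d. N j * (zs j - mu j) / (sd j)\<^sup>2)"
  define m where "m = mstar d mu sd zs"
  define L where "L = ln ((real n - 1) / real n)"
  have n_pos: "0 < real n"
    using n by auto
  have "(((\<Sum>k=1..n. x tau k j) - real n * zs j) / (sqrt (real n) * sd j))\<^sup>2
      = real n * ((N j)\<^sup>2 / (sd j)\<^sup>2 + (zs j - mu j)\<^sup>2 / (sd j)\<^sup>2 - 2 * (N j * (zs j - mu j) / (sd j)\<^sup>2))"
    if "j \<in> {1..d}" for j
    unfolding N_def using n_pos sd[OF that] by (intro square_standardized_sum_eq) auto
  then have "(\<Sum>j=1..d. (((\<Sum>k=1..n. x tau k j) - real n * zs j) / (sqrt (real n) * sd j))\<^sup>2)
      = (\<Sum>j=1..d. real n * ((N j)\<^sup>2 / (sd j)\<^sup>2 + (zs j - mu j)\<^sup>2 / (sd j)\<^sup>2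
          - 2 * (N j * (zs j - mu j) / (sd j)\<^sup>2)))"
    by (rule sum.cong[OF refl])
  also have "\<dots> = real n * (A + m - 2 * B)"
    unfolding A_def B_def m_def mstar_def
    by (simp only: sum_distrib_left[symmetric] sum.distrib sum_subtractf)
  finally have squares: "(\<Sum>j=1..d. (((\<Sum>k=1..n. x tau k j) - real n * zs j) / (sqrt (real n) * sd j))\<^sup>2)
      = real n * (A + m - 2 * B)" .
  define s where "s = real n - 1"
  have s_pos: "0 < s" and n_eq: "real n = s + 1"
    using n by (auto simp: s_def)
  have llr: "logLR n d mu sd zs x tau
      = - real d / 2 * L - (s + 1) / (2 * s) * A + (s + 1) / s * B - m / (2 * s)"
    by (simp add: logLR_def Let_def A_def B_def m_def mstar_def N_def L_def s_def)
  have llr2: "2 * s * logLR n d mu sd zs x tau = - s * real d * L - (s + 1) * A + 2 * (s + 1) * B - m"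
    unfolding llr using s_pos by (simp add: field_simps)
  have Rsq: "real n * Rsq n d m \<gamma> = 2 * s * (m / 2 - \<gamma> - real d / 2 * L)"
    using n_pos by (simp add: Rsq_def L_def s_def)
  have "\<gamma> \<le> logLR n d mu sd zs x tau \<longleftrightarrow> 2 * s * \<gamma> \<le> 2 * s * logLR n d mu sd zs x tau"
    using s_pos by simp
  then show ?thesis
    unfolding squares m_def[symmetric] Rsq llr2 by (simp add: n_eq algebra_simps)
qed

lemma (in prob_space) indep_vars_batch_sums:
  fixes X :: "nat \<Rightarrow> nat \<Rightarrow> nat \<Rightarrow> 'a \<Rightarrow> real"
  assumes indep: "indep_vars (\<lambda>_. borel) (\<lambda>(t, k, j). X t k j) ({1..T} \<times> {1..n} \<times> {1..d})"
    and tau: "tau \<in> {1..T}"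
  shows "indep_vars (\<lambda>_. borel) (\<lambda>j \<omega>. \<Sum>k=1..n. X tau k j \<omega>) {1..d}"
proof -
  have "indep_vars (\<lambda>_. borel) (\<lambda>j \<omega>. \<Sum>i\<in>(\<lambda>k. (tau, k, j)) ` {1..n}. (\<lambda>(t, k, j). X t k j) i \<omega>) {1..d}"
    using tau by (intro indep_vars_block_sums[OF indep]) (auto simp: disjoint_family_on_def)
  then show ?thesis
    by (simp add: sum.reindex inj_on_def)
qed

lemma (in prob_space) normal_distributed_standardized_batch_sum:
  fixes X :: "nat \<Rightarrow> nat \<Rightarrow> nat \<Rightarrow> 'a \<Rightarrow> real"
  assumes indep: "indep_vars (\<lambda>_. borel) (\<lambda>(t, k, j). X t k j) ({1..T} \<times> {1..n} \<times> {1..d})"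
    and "tau \<in> {1..T}" "j \<in> {1..d}" and n: "1 \<le> n" and \<sigma>: "0 < \<sigma>"
    and "\<And>k. k \<in> {1..n} \<Longrightarrow> distributed M lborel (X tau k j) (normal_density \<mu> \<sigma>)"
  shows "distributed M lborel (\<lambda>\<omega>. ((\<Sum>k=1..n. X tau k j \<omega>) - real n * z) / (sqrt (real n) * \<sigma>))
           (normal_density (sqrt (real n) * (\<mu> - z) / \<sigma>) 1)"
proof -
  have "indep_vars (\<lambda>_. borel) (\<lambda>k \<omega>. \<Sum>i\<in>{(tau, k, j)}. (\<lambda>(t, k, j). X t k j) i \<omega>) {1..n}"
    using assms by (intro indep_vars_block_sums[OF indep]) (auto simp: disjoint_family_on_def)
  then have "indep_vars (\<lambda>_. borel) (\<lambda>k. X tau k j) {1..n}"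
    by simp
  from sum_indep_normal[OF _ _ this, where \<sigma>="\<lambda>_. \<sigma>" and \<mu>="\<lambda>_. \<mu>"]
  have "distributed M lborel (\<lambda>\<omega>. \<Sum>k=1..n. X tau k j \<omega>) (normal_density (real n * \<mu>) (sqrt (real n) * \<sigma>))"
    using assms by (simp add: real_sqrt_mult)
  from normal_distributed_standardize[OF this, of "real n * z"]
  have "distributed M lborel (\<lambda>\<omega>. ((\<Sum>k=1..n. X tau k j \<omega>) - real n * z) / (sqrt (real n) * \<sigma>))
      (normal_density ((real n * \<mu> - real n * z) / (sqrt (real n) * \<sigma>)) 1)"
    using n \<sigma> by simp
  moreover have "real n * \<mu> - real n * z = sqrt (real n) * (sqrt (real n) * (\<mu> - z))"
    by (metis mult.assoc right_diff_distrib real_sqrt_mult_self abs_of_nat)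
  ultimately show ?thesis
    using n \<sigma> by simp
qed

theorem corollaryB6:
  fixes M :: "'a measure" and X :: "nat \<Rightarrow> nat \<Rightarrow> nat \<Rightarrow> 'a \<Rightarrow> real"
    and T n d tau :: nat and mu sd zs :: "nat \<Rightarrow> real" and \<gamma> :: real
  assumes "prob_space M"
    and "T \<ge> 1" and "n \<ge> 2" and "d \<ge> 1" and "tau \<in> {1..T}"
    and "\<And>j. j \<in> {1..d} \<Longrightarrow> sd j > 0"
    and "prob_space.indep_vars M (\<lambda>_. borel) (\<lambda>(t, k, j). X t k j) ({1..T} \<times> {1..n} \<times> {1..d})"
    and "\<And>t k j. t \<in> {1..T} \<Longrightarrow> k \<in> {1..n} \<Longrightarrow> j \<in> {1..d} \<Longrightarrow>
           distributed M lborel (X t k j) (normal_density (mu j) (sd j))"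
    and "\<gamma> \<le> gamma_max n d (mstar d mu sd zs)"
  shows "measure M {\<omega> \<in> space M. logLR n d mu sd zs (\<lambda>t k j. X t k j \<omega>) tau \<ge> \<gamma>}
         = nc_chi2_cdf d (real n * mstar d mu sd zs)
             (real n * Rsq n d (mstar d mu sd zs) \<gamma>)"
proof -
  interpret prob_space M
    by fact
  define Y where "Y = (\<lambda>j \<omega>. ((\<Sum>k=1..n. X tau k j \<omega>) - real n * zs j) / (sqrt (real n) * sd j))"
  define c where "c j = sqrt (real n) * (mu j - zs j) / sd j" for j
  have "indep_vars (\<lambda>_. borel) Y {1..d}"
    using indep_vars_compose2[OF indep_vars_batch_sums[OF assms(7,5)],
        where Y="\<lambda>j s. (s - real n * zs j) / (sqrt (real n) * sd j)"]
    by (simp add: Y_def)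
  moreover have "distributed M lborel (Y j) (normal_density (c j) 1)" if "j \<in> {1..d}" for j
    unfolding Y_def c_def using assms that
    by (intro normal_distributed_standardized_batch_sum[where T=T and d=d]) auto
  moreover have "(\<Sum>j=1..d. (c j)\<^sup>2) = real n * mstar d mu sd zs"
    using assms(3) by (simp add: c_def mstar_def power_divide power_mult_distrib power2_commute sum_distrib_left)
  ultimately have "distributed M lborel (\<lambda>\<omega>. \<Sum>j=1..d. (Y j \<omega>)\<^sup>2)
      (\<lambda>x. ennreal (nc_chi2_density d (real n * mstar d mu sd zs) x))"
    using distributed_sum_squares_normal[of "{1..d}" Y c] assms(4) by simp
  moreover have "{\<omega> \<in> space M. \<gamma> \<le> logLR n d mu sd zs (\<lambda>t k j. X t k j \<omega>) tau}
      = {\<omega> \<in> space M. (\<Sum>j=1..d. (Y j \<omega>)\<^sup>2) \<le> real n * Rsq n d (mstar d mu sd zs) \<gamma>}"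
    using logLR_ge_iff[OF assms(3,6)] by (simp add: Y_def)
  moreover have "0 \<le> mstar d mu sd zs"
    by (simp add: mstar_def sum_nonneg)
  ultimately show ?thesis
    using assms(4) by (simp add: prob_le_distributed nc_chi2_density_nonneg nc_chi2_cdf_def)
qed

end
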